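(* Consider the hybrid system (2.2) where $F$ is defined for all $(h,x)\in[0,r]\times\mathbb{R}^n$. Suppose there exist $\sigma>0$, $\lambda\in(0,1)$ and $a\in K_\infty$ such that $|z(t,z_0)|\le\exp(-\sigma t)a(|z_0|)$ for all $t\ge0$, $z_0\in\mathbb{R}^n$, and $|x(t,x_0;u)|\le\exp(-\lambda\sigma t)a(|x_0|)$ for all $t\ge0$, $x_0\in\mathbb{R}^n$ and all locally bounded $u:\mathbb{R}^+\to\mathbb{R}^+$. Suppose further there is a continuous $L:\mathbb{R}^n\to(0,+\infty)$ such that $|F(h,z)-F(h,x)|\le L(x_0)|z-x|$ for all $x_0\in\mathbb{R}^n$, all $z,x$ with $|x|,|z|\le a(|x_0|)$ and all $h\in[0,\varphi(x)]$. For $x_0$, $u$ given, let $\tau_i,h_i$ be the switching times and step sizes of $x(\cdot,x_0;u)$, let $e(t):=z(t,x_0)-x(t,x_0;u)$, $\tilde d(h,x):=\frac{z(h,x)-x}{h}-F(h,x)$ and $D_i(x_0):=\max_{j=0,\dots,i}|\tilde d(h_j,z(\tau_j,x_0))|$. Then for all $i\ge0$, $$|e(\tau_{i+1})|\le\frac{D_i(x_0)}{L(x_0)}\big(\exp(L(x_0)\tau_{i+1})-1\big)$$ and $$|e(\tau_{i+1})|\le\Big(\frac{D_i(x_0)}{L(x_0)}\Big)^{\frac{\lambda\sigma}{\lambda\sigma+L(x_0)}}\big(2a(|x_0|)\big)^{\frac{L(x_0)}{\lambda\sigma+L(x_0)}}.$$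
   Context: Standing framework: $f$ locally Lipschitz, $f(0)=0$, $z(t,x)$ the solution of $\dot z=f(z)$ with $z(0)=x$. $r>0$, $\varphi:\mathbb{R}^n\to(0,r]$ continuous, $F$ with $F(h,0)=0$, $\lim_{h\to0^+}F(h,x)=f(x)$, and $|F(h,x)|\le|x|M(|x|)$ for a continuous nondecreasing $M$. The hybrid system (2.2): for each locally bounded $u:\mathbb{R}^+\to\mathbb{R}^+$ and $x_0$, $\tau_0=0$, $x(0)=x_0$, $h_i=\varphi(x(\tau_i))\exp(-u(\tau_i))$, $\tau_{i+1}=\tau_i+h_i$, $x(t)=x(\tau_i)+(t-\tau_i)F(h_i,x(\tau_i))$ on $[\tau_i,\tau_{i+1}]$; its solution is $x(t,x_0;u)$. $K_\infty$ is the class of continuous increasing $\rho:\mathbb{R}^+\to\mathbb{R}^+$ with $\rho(0)=0$ and $\rho(s)\to\infty$ as $s\to\infty$. *)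

theory Defs
  imports "HOL-Analysis.Analysis"
begin

definition loc_lipschitz :: "('a::real_normed_vector \<Rightarrow> 'a) \<Rightarrow> bool" where
  "loc_lipschitz f \<longleftrightarrow> (\<forall>x. \<exists>U C. open U \<and> x \<in> U \<and>
      (\<forall>y\<in>U. \<forall>w\<in>U. norm (f y - f w) \<le> C * norm (y - w)))"

definition class_K_inf :: "(real \<Rightarrow> real) \<Rightarrow> bool" where
  "class_K_inf a \<longleftrightarrow> continuous_on {0..} a \<and> strict_mono_on {0..} a \<and> a 0 = 0
      \<and> filterlim a at_top at_top"

definition loc_bounded_input :: "(real \<Rightarrow> real) \<Rightarrow> bool" where
  "loc_bounded_input u \<longleftrightarrow> (\<forall>t\<ge>0. u t \<ge> 0) \<and> (\<forall>T\<ge>0. bounded (u ` {0..T}))"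

text \<open>Hybrid system (2.2): the pair (tau_i, x(tau_i)).\<close>
fun hyb_state :: "('a::real_normed_vector \<Rightarrow> real) \<Rightarrow> (real \<Rightarrow> 'a \<Rightarrow> 'a) \<Rightarrow> (real \<Rightarrow> real)
      \<Rightarrow> 'a \<Rightarrow> nat \<Rightarrow> real \<times> 'a" where
  "hyb_state \<phi> F u x0 0 = (0, x0)"
| "hyb_state \<phi> F u x0 (Suc i) =
     (let (t, x) = hyb_state \<phi> F u x0 i; h = \<phi> x * exp (- u t) in (t + h, x + h *\<^sub>R F h x))"

definition sw_time :: "('a::real_normed_vector \<Rightarrow> real) \<Rightarrow> (real \<Rightarrow> 'a \<Rightarrow> 'a) \<Rightarrow> (real \<Rightarrow> real)
      \<Rightarrow> 'a \<Rightarrow> nat \<Rightarrow> real" where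
  "sw_time \<phi> F u x0 i = fst (hyb_state \<phi> F u x0 i)"

definition sw_pt :: "('a::real_normed_vector \<Rightarrow> real) \<Rightarrow> (real \<Rightarrow> 'a \<Rightarrow> 'a) \<Rightarrow> (real \<Rightarrow> real)
      \<Rightarrow> 'a \<Rightarrow> nat \<Rightarrow> 'a" where
  "sw_pt \<phi> F u x0 i = snd (hyb_state \<phi> F u x0 i)"

definition step_size :: "('a::real_normed_vector \<Rightarrow> real) \<Rightarrow> (real \<Rightarrow> 'a \<Rightarrow> 'a) \<Rightarrow> (real \<Rightarrow> real)
      \<Rightarrow> 'a \<Rightarrow> nat \<Rightarrow> real" where
  "step_size \<phi> F u x0 i = \<phi> (sw_pt \<phi> F u x0 i) * exp (- u (sw_time \<phi> F u x0 i))"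

text \<open>The solution x(t, x0; u) on the interval [tau_i, tau_(i+1)].\<close>
definition hyb_traj :: "('a::real_normed_vector \<Rightarrow> real) \<Rightarrow> (real \<Rightarrow> 'a \<Rightarrow> 'a) \<Rightarrow> (real \<Rightarrow> real)
      \<Rightarrow> 'a \<Rightarrow> nat \<Rightarrow> real \<Rightarrow> 'a" where
  "hyb_traj \<phi> F u x0 i t = sw_pt \<phi> F u x0 i
      + (t - sw_time \<phi> F u x0 i) *\<^sub>R F (step_size \<phi> F u x0 i) (sw_pt \<phi> F u x0 i)"

end

theory Submission
  imports Defs
begin

text \<open>
  Write \<open>E j = |z(\<tau>\<^sub>j, x\<^sub>0) - x(\<tau>\<^sub>j)|\<close> for the error at the
  switching times.  Since the exact solution is a flow, \<open>z(\<tau>\<^sub>j\<^sub>+\<^sub>1, x\<^sub>0) =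
  z(h\<^sub>j, z(\<tau>\<^sub>j, x\<^sub>0))\<close>, and splitting off the local truncation error \<open>d\<close> and
  using the Lipschitz bound for \<open>F\<close> gives the one-step recursion
  \<open>E (j+1) \<le> (1 + h\<^sub>j L) E j + h\<^sub>j |d\<^sub>j|\<close>.  A discrete Gronwall inequality turns this
  into the first (exponentially growing) bound.  The stability estimates for both systems
  give a second, exponentially decaying bound \<open>E \<le> 2 a(|x\<^sub>0|) exp(-\<lambda>\<sigma>t)\<close>, and
  interpolating the two bounds (their minimum is at most a weighted geometric mean) yields
  the second estimate.
\<close>

subsection \<open>Uniqueness of solutions and the flow property\<close>

text \<open>A function vanishing at \<open>s\<close> whose derivative is bounded by \<open>C\<close> times its own norm
  vanishes on \<open>[s, s + \<delta>]\<close> as long as \<open>\<delta> C < 1\<close>: its maximum \<open>m\<close> there satisfies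
  \<open>m \<le> \<delta> C m\<close>.\<close>
lemma zero_of_linear_derivative_bound:
  fixes g g' :: "real \<Rightarrow> 'b::real_normed_vector"
  assumes deriv: "\<And>t. t \<in> {s..s+\<delta>} \<Longrightarrow> (g has_vector_derivative g' t) (at t within {s..s+\<delta>})"
    and bound: "\<And>t. t \<in> {s..s+\<delta>} \<Longrightarrow> norm (g' t) \<le> C * norm (g t)"
    and start: "g s = 0" and \<delta>: "\<delta> \<ge> 0" and C: "C \<ge> 0" "\<delta> * C < 1"
  shows "\<forall>t\<in>{s..s+\<delta>}. g t = 0"
proof -
  let ?K = "{s..s+\<delta>}"
  have "continuous_on ?K g"
    using deriv has_vector_derivative_continuous by (metis continuous_on_eq_continuous_within)
  then have "continuous_on ?K (\<lambda>t. norm (g t))" by (intro continuous_intros)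
  then obtain tm where tm: "tm \<in> ?K" and max: "\<And>t. t \<in> ?K \<Longrightarrow> norm (g t) \<le> norm (g tm)"
    using continuous_attains_sup[of ?K "\<lambda>t. norm (g t)"] \<delta> by auto
  define m where "m = norm (g tm)"
  have s_in: "s \<in> ?K" using \<delta> by simp
  have g's: "g' s = 0" using bound[OF s_in] start by simp
  have "norm (g t) \<le> \<delta> * C * m" if t: "t \<in> ?K" for t
  proof -
    have "norm (g t - g s - (t - s) *\<^sub>R g' s) \<le> norm (t - s) * (C * m)"
    proof (rule vector_differentiable_bound_linearization[OF deriv _ _ s_in])
      show "closed_segment s t \<subseteq> ?K" using t by (auto simp: closed_segment_eq_real_ivl)
      show "norm (g' x - g' s) \<le> C * m" if "x \<in> ?K" for x
        using bound[OF that] max[OF that] C g's by (simp add: m_def mult_left_mono order_trans)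
    qed
    also have "\<dots> \<le> \<delta> * (C * m)"
      using t C by (intro mult_right_mono) (auto simp: m_def)
    finally show ?thesis using start g's by (simp add: mult.assoc)
  qed
  then have "m \<le> (\<delta> * C) * m" using tm m_def by blast
  then have "m = 0" using C by (smt (verit) m_def mult_le_cancel_right1 norm_ge_zero)
  then show ?thesis using max m_def by fastforce
qed

text \<open>Near \<open>s\<close> both stay in a neighbourhood
  where \<open>f\<close> is \<open>C\<close>-Lipschitz, so their difference satisfies the hypotheses of the
  previous lemma.\<close>
lemma ode_local_agreement:
  fixes f :: "'a::real_normed_vector \<Rightarrow> 'a" and y1 y2 :: "real \<Rightarrow> 'a"
  assumes lip: "loc_lipschitz f"
    and sol1: "\<And>t. t \<ge> 0 \<Longrightarrow> (y1 has_vector_derivative f (y1 t)) (at t within {0..})"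
    and sol2: "\<And>t. t \<ge> 0 \<Longrightarrow> (y2 has_vector_derivative f (y2 t)) (at t within {0..})"
    and s: "s \<ge> 0" and agree: "y1 s = y2 s"
  shows "\<exists>\<delta>>0. \<forall>t\<in>{s..s+\<delta>}. y1 t = y2 t"
proof -
  obtain U C where U: "open U" "y1 s \<in> U"
    and lipU: "\<forall>y\<in>U. \<forall>w\<in>U. norm (f y - f w) \<le> C * norm (y - w)"
    using lip unfolding loc_lipschitz_def by meson
  obtain e where e: "e > 0" "ball (y1 s) e \<subseteq> U"
    using U open_contains_ball by blast
  have "continuous (at s within {0..}) y1" "continuous (at s within {0..}) y2"
    using sol1 sol2 s by (auto intro: has_vector_derivative_continuous)
  then obtain d1 d2 where d: "d1 > 0" "d2 > 0"
    and near1: "\<forall>t\<in>{0..}. dist t s < d1 \<longrightarrow> dist (y1 t) (y1 s) < e"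
    and near2: "\<forall>t\<in>{0..}. dist t s < d2 \<longrightarrow> dist (y2 t) (y2 s) < e"
    using e(1) unfolding continuous_within_eps_delta by blast
  define C' where "C' = \<bar>C\<bar> + 1"
  have C': "C' > 0" "C \<le> C'" unfolding C'_def by auto
  define \<delta> where "\<delta> = min (min d1 d2 / 2) (1 / (2 * C'))"
  have \<delta>: "\<delta> > 0" "\<delta> * C' < 1"
  proof -
    show "\<delta> > 0" using d C' unfolding \<delta>_def by simp
    have "\<delta> * C' \<le> (1 / (2 * C')) * C'" unfolding \<delta>_def using C' by (intro mult_right_mono) auto
    then show "\<delta> * C' < 1" using C' by simp
  qed
  have inU: "y1 t \<in> U \<and> y2 t \<in> U" if t: "t \<in> {s..s+\<delta>}" for t
  proof -
    have "t \<in> {0..}" "dist t s < d1" "dist t s < d2"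
      using t s d unfolding \<delta>_def dist_real_def by auto
    then have "dist (y1 s) (y1 t) < e" "dist (y1 s) (y2 t) < e"
      using near1 near2 agree by (auto simp: dist_commute)
    then show ?thesis using e(2) by auto
  qed
  have "\<forall>t\<in>{s..s+\<delta>}. y1 t - y2 t = 0"
  proof (rule zero_of_linear_derivative_bound[where g' = "\<lambda>t. f (y1 t) - f (y2 t)" and C = C'])
    fix t assume t: "t \<in> {s..s+\<delta>}"
    have sub: "{s..s+\<delta>} \<subseteq> {0..}" and t0: "t \<ge> 0" using s t by auto
    show "((\<lambda>t. y1 t - y2 t) has_vector_derivative f (y1 t) - f (y2 t)) (at t within {s..s+\<delta>})"
      using has_vector_derivative_within_subset[OF sol1[OF t0] sub]
        has_vector_derivative_within_subset[OF sol2[OF t0] sub]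
      by (rule has_vector_derivative_diff)
    have "norm (f (y1 t) - f (y2 t)) \<le> C * norm (y1 t - y2 t)" using lipU inU[OF t] by blast
    also have "\<dots> \<le> C' * norm (y1 t - y2 t)" using C' by (intro mult_right_mono) auto
    finally show "norm (f (y1 t) - f (y2 t)) \<le> C' * norm (y1 t - y2 t)" .
  qed (use \<delta> agree C' in auto)
  then show ?thesis using \<delta> by auto
qed

text \<open>Solutions of a locally Lipschitz ODE with equal initial values coincide: at the first
  time \<open>s\<close> where they would differ they still agree (by continuity), and local
  uniqueness at \<open>s\<close> contradicts the choice of \<open>s\<close>.\<close>
lemma ode_unique:
  fixes f :: "'a::real_normed_vector \<Rightarrow> 'a" and y1 y2 :: "real \<Rightarrow> 'a"
  assumes lip: "loc_lipschitz f"
    and sol1: "\<And>t. t \<ge> 0 \<Longrightarrow> (y1 has_vector_derivative f (y1 t)) (at t within {0..})"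
    and sol2: "\<And>t. t \<ge> 0 \<Longrightarrow> (y2 has_vector_derivative f (y2 t)) (at t within {0..})"
    and init: "y1 0 = y2 0" and t: "t \<ge> 0"
  shows "y1 t = y2 t"
proof (rule ccontr)
  assume "y1 t \<noteq> y2 t"
  define S where "S = {t. t \<ge> 0 \<and> y1 t \<noteq> y2 t}"
  have S: "t \<in> S" "bdd_below S" using \<open>y1 t \<noteq> y2 t\<close> t unfolding S_def by (auto intro: bdd_belowI[of _ 0])
  define s where "s = Inf S"
  have s: "0 \<le> s" using S unfolding s_def by (auto intro: cInf_greatest simp: S_def)
  have below: "y1 t' - y2 t' = 0" if t': "0 \<le> t'" "t' < s" for t'
  proof (rule ccontr)
    assume "y1 t' - y2 t' \<noteq> 0"
    then have "t' \<in> S" using t' by (simp add: S_def)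
    then have "s \<le> t'" unfolding s_def using S(2) by (rule cInf_lower)
    then show False using t' by simp
  qed
  have "y1 s - y2 s = 0"
  proof (cases "s = 0")
    case False
    have "continuous_on {0..} y1" "continuous_on {0..} y2"
      using has_vector_derivative_continuous[OF sol1] has_vector_derivative_continuous[OF sol2]
      by (auto simp: continuous_on_eq_continuous_within)
    then have "continuous_on {0..} (\<lambda>t. y1 t - y2 t)" by (intro continuous_intros)
    then have "closed {t \<in> {0..}. y1 t - y2 t = 0}"
      by (rule continuous_closed_preimage_constant) auto
    moreover have "{0..<s} \<subseteq> {t \<in> {0..}. y1 t - y2 t = 0}" using below by auto
    ultimately have "closure {0..<s} \<subseteq> {t \<in> {0..}. y1 t - y2 t = 0}" by (rule closure_minimal[rotated])
    moreover have "s \<in> closure {0..<s}" using False s by simp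
    ultimately show ?thesis by auto
  qed (use init in simp)
  then obtain \<delta> where \<delta>: "\<delta> > 0" "\<And>t'. t' \<in> {s..s+\<delta>} \<Longrightarrow> y1 t' = y2 t'"
    using ode_local_agreement[OF lip sol1 sol2 s] by auto
  have "s + \<delta> \<le> s" unfolding s_def
  proof (rule cInf_greatest)
    fix t' assume t': "t' \<in> S"
    then have "s \<le> t'" unfolding s_def using S(2) by (rule cInf_lower)
    moreover have "y1 t' \<noteq> y2 t'" using t' by (simp add: S_def)
    ultimately show "Inf S + \<delta> \<le> t'" using \<delta>(2) unfolding s_def by force
  qed (use S in auto)
  then show False using \<delta> by simp
qed

lemma flow_semigroup:
  fixes f :: "'a::real_normed_vector \<Rightarrow> 'a" and z :: "real \<Rightarrow> 'a \<Rightarrow> 'a"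
  assumes lip: "loc_lipschitz f" and z_init: "\<forall>x. z 0 x = x"
    and z_ode: "\<forall>x. \<forall>t\<ge>0. ((\<lambda>s. z s x) has_vector_derivative f (z t x)) (at t within {0..})"
    and \<tau>: "\<tau> \<ge> 0" and s: "s \<ge> 0"
  shows "z (\<tau> + s) x = z s (z \<tau> x)"
proof (rule ode_unique[OF lip _ _ _ s])
  fix t :: real assume t: "t \<ge> 0"
  have shift: "((\<lambda>s. \<tau> + s) has_vector_derivative 1) (at t within {0..})"
    by (auto intro!: derivative_eq_intros simp: has_vector_derivative_def)
  have "((\<lambda>s. z s x) has_vector_derivative f (z (\<tau> + t) x)) (at (\<tau> + t) within (\<lambda>s. \<tau> + s) ` {0..})"
    by (rule has_vector_derivative_within_subset[where S = "{0..}"]) (use z_ode \<tau> t in auto)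
  from vector_diff_chain_within[OF shift this]
  show "((\<lambda>s. z (\<tau> + s) x) has_vector_derivative f (z (\<tau> + t) x)) (at t within {0..})"
    by (simp add: o_def)
  show "((\<lambda>s. z s (z \<tau> x)) has_vector_derivative f (z t (z \<tau> x))) (at t within {0..})"
    using z_ode t by simp
qed (use z_init in simp)

subsection \<open>Two real-variable inequalities\<close>

lemma discrete_gronwall:
  fixes E h d t :: "nat \<Rightarrow> real" and L D :: real
  assumes E0: "E 0 = 0" and L: "L > 0" and D: "D \<ge> 0"
    and t_step: "\<And>j. t (Suc j) = t j + h j" and h: "\<And>j. h j \<ge> 0"
    and E_step: "\<And>j. E (Suc j) \<le> (1 + h j * L) * E j + h j * d j"
    and d: "\<And>j. j < n \<Longrightarrow> d j \<le> D"
  shows "E n \<le> D / L * (exp (L * (t n - t 0)) - 1)"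
  using d
proof (induction n)
  case 0
  then show ?case using E0 by simp
next
  case (Suc n)
  define P where "P = D / L"
  have P: "P \<ge> 0" using D L by (simp add: P_def)
  have IH: "E n \<le> P * (exp (L * (t n - t 0)) - 1)" using Suc by (simp add: P_def)
  have "E (Suc n) \<le> (1 + h n * L) * E n + h n * d n" by (rule E_step)
  also have "\<dots> \<le> (1 + h n * L) * (P * (exp (L * (t n - t 0)) - 1)) + h n * (P * L)"
    using IH Suc.prems[of n] h[of n] L by (intro add_mono mult_left_mono) (auto simp: P_def)
  also have "\<dots> = P * ((1 + h n * L) * exp (L * (t n - t 0)) - 1)"
    by (simp add: algebra_simps)
  also have "\<dots> \<le> P * (exp (h n * L) * exp (L * (t n - t 0)) - 1)"
    using P exp_ge_add_one_self[of "h n * L"] by (intro mult_left_mono) (auto intro: mult_right_mono)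
  also have "\<dots> = P * (exp (L * (t (Suc n) - t 0)) - 1)"
    by (simp add: t_step exp_add[symmetric] algebra_simps)
  finally show ?case by (simp add: P_def)
qed

text \<open>Interpolation: if \<open>X \<le> P (exp (l T) - 1)\<close> and \<open>X \<le> B exp (-k T)\<close>, then \<open>X\<close> is
  bounded by the weighted geometric mean \<open>P\<^sup>k\<^sup>/\<^sup>(\<^sup>k\<^sup>+\<^sup>l\<^sup>) B\<^sup>l\<^sup>/\<^sup>(\<^sup>k\<^sup>+\<^sup>l\<^sup>)\<close>,
  in which the dependence on \<open>T\<close> cancels.\<close>
lemma interpolate_bounds:
  fixes X P B k l T :: real
  assumes X: "X \<ge> 0" and P: "P \<ge> 0" and B: "B \<ge> 0" and k: "k > 0" and l: "l > 0"
    and grow: "X \<le> P * (exp (l * T) - 1)" and decay: "X \<le> B * exp (- k * T)"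
  shows "X \<le> P powr (k / (k + l)) * B powr (l / (k + l))"
proof -
  define p q where "p = k / (k + l)" and "q = l / (k + l)"
  have pq: "p + q = 1" "p \<ge> 0" "q \<ge> 0" using k l by (auto simp: p_def q_def add_divide_distrib[symmetric])
  have "X \<le> P * exp (l * T)" using grow P by (smt (verit) mult_left_mono exp_gt_zero)
  have "X = X powr p * X powr q"
    using pq X by (cases "X = 0") (auto simp: powr_add[symmetric])
  also have "\<dots> \<le> (P * exp (l * T)) powr p * (B * exp (- k * T)) powr q"
    using \<open>X \<le> P * exp (l * T)\<close> decay pq X by (intro mult_mono powr_mono2) auto
  also have "\<dots> = P powr p * B powr q * exp (l * T * p - k * T * q)"
    using P B by (simp add: powr_mult exp_powr_real exp_add[symmetric] algebra_simps)
  also have "l * T * p - k * T * q = 0" unfolding p_def q_def by (simp add: algebra_simps)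
  finally show ?thesis by (simp add: p_def q_def)
qed

subsection \<open>The hybrid system\<close>

lemma sw_time_0 [simp]: "sw_time \<phi> F u x0 0 = 0"
  and sw_pt_0 [simp]: "sw_pt \<phi> F u x0 0 = x0"
  by (simp_all add: sw_time_def sw_pt_def)

lemma sw_time_Suc: "sw_time \<phi> F u x0 (Suc j) = sw_time \<phi> F u x0 j + step_size \<phi> F u x0 j"
  by (simp add: sw_time_def sw_pt_def step_size_def Let_def split: prod.split)

lemma sw_pt_Suc: "sw_pt \<phi> F u x0 (Suc j) =
    sw_pt \<phi> F u x0 j + step_size \<phi> F u x0 j *\<^sub>R F (step_size \<phi> F u x0 j) (sw_pt \<phi> F u x0 j)"
  by (simp add: sw_time_def sw_pt_def step_size_def Let_def split: prod.split)

lemma hyb_traj_switch_points: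
  "hyb_traj \<phi> F u x0 j (sw_time \<phi> F u x0 j) = sw_pt \<phi> F u x0 j"
  "hyb_traj \<phi> F u x0 j (sw_time \<phi> F u x0 (Suc j)) = sw_pt \<phi> F u x0 (Suc j)"
  by (simp_all add: hyb_traj_def sw_time_Suc sw_pt_Suc)

lemma step_size_pos: "\<forall>x. \<phi> x > 0 \<Longrightarrow> step_size \<phi> F u x0 j > 0"
  by (simp add: step_size_def)

lemma sw_time_nonneg:
  assumes "\<forall>x. \<phi> x > 0"
  shows "sw_time \<phi> F u x0 j \<ge> 0"
proof (induction j)
  case 0
  show ?case by simp
next
  case (Suc j)
  then show ?case using step_size_pos[OF assms] by (simp add: sw_time_Suc add_nonneg_pos less_imp_le)
qed

lemma step_size_le_phi:
  assumes "\<forall>x. \<phi> x > 0" and "\<forall>t\<ge>0. u t \<ge> 0"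
  shows "step_size \<phi> F u x0 j \<le> \<phi> (sw_pt \<phi> F u x0 j)"
proof -
  have "exp (- u (sw_time \<phi> F u x0 j)) \<le> 1" using assms sw_time_nonneg[OF assms(1)] by simp
  then show ?thesis using assms(1) by (simp add: step_size_def mult_left_le)
qed

lemma sw_pt_bound:
  assumes "\<forall>x. \<phi> x > 0"
    and "\<forall>i. \<forall>t\<in>{sw_time \<phi> F u x0 i..sw_time \<phi> F u x0 (Suc i)}. norm (hyb_traj \<phi> F u x0 i t) \<le> b t"
  shows "norm (sw_pt \<phi> F u x0 j) \<le> b (sw_time \<phi> F u x0 j)"
proof -
  have "sw_time \<phi> F u x0 j \<in> {sw_time \<phi> F u x0 j..sw_time \<phi> F u x0 (Suc j)}"
    using step_size_pos[OF assms(1)] by (simp add: sw_time_Suc less_imp_le)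
  then show ?thesis using assms(2) hyb_traj_switch_points(1) by metis
qed

subsection \<open>Propagation of the error\<close>

definition trunc_err :: "(real \<Rightarrow> 'a \<Rightarrow> 'a) \<Rightarrow> (real \<Rightarrow> 'a \<Rightarrow> 'a) \<Rightarrow> real \<Rightarrow> 'a \<Rightarrow> 'a::real_normed_vector"
  where "trunc_err z F h x = (1 / h) *\<^sub>R (z h x - x) - F h x"

lemma one_step_error:
  fixes z F :: "real \<Rightarrow> 'a::real_normed_vector \<Rightarrow> 'a"
  assumes h: "h > 0" and lip: "norm (F h y - F h x) \<le> K * norm (y - x)"
  shows "norm (z h y - (x + h *\<^sub>R F h x)) \<le> (1 + h * K) * norm (y - x) + h * norm (trunc_err z F h y)"
proof -
  have "z h y - (x + h *\<^sub>R F h x) = (y - x) + h *\<^sub>R (F h y - F h x) + h *\<^sub>R trunc_err z F h y"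
    using h by (simp add: trunc_err_def algebra_simps)
  then have "norm (z h y - (x + h *\<^sub>R F h x))
      \<le> norm (y - x) + h * norm (F h y - F h x) + h * norm (trunc_err z F h y)"
    using h by (metis abs_of_pos norm_scaleR norm_triangle_le norm_triangle_mono order_refl)
  also have "\<dots> \<le> norm (y - x) + h * (K * norm (y - x)) + h * norm (trunc_err z F h y)"
    using lip h by (simp add: mult_left_mono)
  finally show ?thesis by (simp add: algebra_simps)
qed

text \<open>Exponential growth bound for the error at the switching times, with \<open>D\<close> the largest
  truncation error along the exact solution; the Lipschitz bound for \<open>F\<close> is only needed
  between the exact and approximate states at the switching times.\<close>
lemma hybrid_error_growth:
  fixes f :: "'a::real_normed_vector \<Rightarrow> 'a" and z F :: "real \<Rightarrow> 'a \<Rightarrow> 'a"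
  assumes f_lip: "loc_lipschitz f" and z_init: "\<forall>x. z 0 x = x"
    and z_ode: "\<forall>x. \<forall>t\<ge>0. ((\<lambda>s. z s x) has_vector_derivative f (z t x)) (at t within {0..})"
    and \<phi>_pos: "\<forall>x. \<phi> x > 0" and u_nonneg: "\<forall>t\<ge>0. u t \<ge> 0" and K: "K > 0"
    and F_lip: "\<And>j h. h \<in> {0..\<phi> (sw_pt \<phi> F u x0 j)} \<Longrightarrow>
      norm (F h (z (sw_time \<phi> F u x0 j) x0) - F h (sw_pt \<phi> F u x0 j))
        \<le> K * norm (z (sw_time \<phi> F u x0 j) x0 - sw_pt \<phi> F u x0 j)"
  shows "norm (z (sw_time \<phi> F u x0 (Suc i)) x0 - sw_pt \<phi> F u x0 (Suc i))
    \<le> Max ((\<lambda>j. norm (trunc_err z F (step_size \<phi> F u x0 j) (z (sw_time \<phi> F u x0 j) x0))) ` {0..i}) / K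
        * (exp (K * sw_time \<phi> F u x0 (Suc i)) - 1)"
proof -
  let ?\<tau> = "sw_time \<phi> F u x0" and ?h = "step_size \<phi> F u x0" and ?x = "sw_pt \<phi> F u x0"
  let ?E = "\<lambda>j. norm (z (?\<tau> j) x0 - ?x j)"
    and ?d = "\<lambda>j. norm (trunc_err z F (?h j) (z (?\<tau> j) x0))"
  have E_step: "?E (Suc j) \<le> (1 + ?h j * K) * ?E j + ?h j * ?d j" for j
  proof -
    have flow: "z (?\<tau> (Suc j)) x0 = z (?h j) (z (?\<tau> j) x0)"
      using flow_semigroup[OF f_lip z_init z_ode sw_time_nonneg[OF \<phi>_pos] less_imp_le[OF step_size_pos[OF \<phi>_pos]]]
      by (simp add: sw_time_Suc)
    have "?h j \<in> {0..\<phi> (?x j)}"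
      using step_size_pos[OF \<phi>_pos] step_size_le_phi[OF \<phi>_pos u_nonneg] by (simp add: less_imp_le)
    from one_step_error[where z = z and F = F and h = "?h j" and y = "z (?\<tau> j) x0" and x = "?x j",
        OF step_size_pos[OF \<phi>_pos] F_lip[OF this]]
    show ?thesis by (simp add: flow sw_pt_Suc)
  qed
  define D where "D = Max (?d ` {0..i})"
  have d_le: "?d j \<le> D" if "j < Suc i" for j
    using that by (auto simp: D_def intro: Max_ge)
  have "D \<ge> 0" using d_le[of 0] norm_ge_zero order_trans by blast
  have "?E (Suc i) \<le> D / K * (exp (K * (?\<tau> (Suc i) - ?\<tau> 0)) - 1)"
    by (rule discrete_gronwall[where E = ?E and d = ?d, OF _ K \<open>D \<ge> 0\<close> sw_time_Suc _ E_step d_le])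
      (use z_init step_size_pos[OF \<phi>_pos] in \<open>auto simp: less_imp_le\<close>)
  then show ?thesis by (simp add: D_def)
qed

lemma difference_decay:
  fixes y x :: "'a::real_normed_vector"
  assumes y: "norm y \<le> exp (- \<sigma> * t) * A" and x: "norm x \<le> exp (- lam * \<sigma> * t) * A"
    and A: "A \<ge> 0" and \<sigma>: "\<sigma> \<ge> 0" and t: "t \<ge> 0" and lam: "lam \<le> 1"
  shows "norm (y - x) \<le> 2 * A * exp (- (lam * \<sigma>) * t)"
proof -
  have "lam * \<sigma> * t \<le> \<sigma> * t"
    using mult_right_mono[OF lam, of "\<sigma> * t"] \<sigma> t by (simp add: mult.assoc)
  then have "exp (- \<sigma> * t) \<le> exp (- lam * \<sigma> * t)" by simp
  then have "norm y \<le> exp (- lam * \<sigma> * t) * A" using y A by (meson mult_right_mono order_trans)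
  then show ?thesis using norm_triangle_ineq4[of y x] x by (simp add: algebra_simps)
qed

theorem mainTheorem10:
  fixes f :: "'a::euclidean_space \<Rightarrow> 'a"
    and z :: "real \<Rightarrow> 'a \<Rightarrow> 'a"
    and \<phi> :: "'a \<Rightarrow> real"
    and F :: "real \<Rightarrow> 'a \<Rightarrow> 'a"
    and M :: "real \<Rightarrow> real"
    and r \<sigma> lam :: real
    and a :: "real \<Rightarrow> real"
    and L :: "'a \<Rightarrow> real"
    and u :: "real \<Rightarrow> real"
    and x0 :: 'a
  assumes f_lip: "loc_lipschitz f"
    and f0: "f 0 = 0"
    and z_init: "\<forall>x. z 0 x = x"
    and z_ode: "\<forall>x. \<forall>t\<ge>0. ((\<lambda>s. z s x) has_vector_derivative f (z t x)) (at t within {0..})"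
    and r_pos: "r > 0"
    and \<phi>_cont: "continuous_on UNIV \<phi>"
    and \<phi>_range: "\<forall>x. 0 < \<phi> x \<and> \<phi> x \<le> r"
    and F0: "\<forall>h\<in>{0..r}. F h 0 = 0"
    and F_lim: "\<forall>x. ((\<lambda>h. F h x) \<longlongrightarrow> f x) (at_right 0)"
    and M_cont: "continuous_on {0..} M"
    and M_mono: "mono_on {0..} M"
    and F_bound: "\<forall>h\<in>{0..r}. \<forall>x. norm (F h x) \<le> norm x * M (norm x)"
    and \<sigma>_pos: "\<sigma> > 0"
    and lam_range: "0 < lam" "lam < 1"
    and a_K: "class_K_inf a"
    and z_stab: "\<forall>t\<ge>0. \<forall>z0. norm (z t z0) \<le> exp (- \<sigma> * t) * a (norm z0)"
    and x_stab: "\<forall>v y0. loc_bounded_input v \<longrightarrow> (\<forall>i. \<forall>t\<in>{sw_time \<phi> F v y0 i..sw_time \<phi> F v y0 (Suc i)}.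
        norm (hyb_traj \<phi> F v y0 i t) \<le> exp (- lam * \<sigma> * t) * a (norm y0))"
    and L_cont: "continuous_on UNIV L"
    and L_pos: "\<forall>x. L x > 0"
    and F_lip: "\<forall>y0 zz x h. norm x \<le> a (norm y0) \<longrightarrow> norm zz \<le> a (norm y0) \<longrightarrow> h \<in> {0..\<phi> x} \<longrightarrow>
        norm (F h zz - F h x) \<le> L y0 * norm (zz - x)"
    and u_lb: "loc_bounded_input u"
  shows "\<forall>i. let \<tau> = sw_time \<phi> F u x0; h = step_size \<phi> F u x0;
            e = (\<lambda>t. z t x0 - hyb_traj \<phi> F u x0 i t);
            dt = (\<lambda>hh x. (1 / hh) *\<^sub>R (z hh x - x) - F hh x);
            D = Max ((\<lambda>j. norm (dt (h j) (z (\<tau> j) x0))) ` {0..i})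
         in norm (e (\<tau> (Suc i))) \<le> D / L x0 * (exp (L x0 * \<tau> (Suc i)) - 1)
          \<and> norm (e (\<tau> (Suc i))) \<le> (D / L x0) powr (lam * \<sigma> / (lam * \<sigma> + L x0))
                * (2 * a (norm x0)) powr (L x0 / (lam * \<sigma> + L x0))"
proof -
  have \<phi>_pos: "\<forall>x. \<phi> x > 0" and u_nonneg: "\<forall>t\<ge>0. u t \<ge> 0"
    using \<phi>_range u_lb by (auto simp: loc_bounded_input_def)
  note \<tau>_nonneg = sw_time_nonneg[OF \<phi>_pos]
  let ?\<tau> = "sw_time \<phi> F u x0" and ?x = "sw_pt \<phi> F u x0" and ?A = "a (norm x0)"
  have "norm x0 \<le> ?A" using z_stab z_init by (metis order_refl mult_1 exp_zero mult_zero_right)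
  then have A: "?A \<ge> 0" using norm_ge_zero order_trans by blast
  have shrink: "exp (c * t) * ?A \<le> ?A" if "c \<le> 0" "t \<ge> 0" for c t
    using that A by (simp add: mult_left_le_one_le mult_nonpos_nonneg)
  have z_decay: "norm (z (?\<tau> j) x0) \<le> exp (- \<sigma> * ?\<tau> j) * ?A" for j
    using z_stab \<tau>_nonneg by simp
  have x_decay: "norm (?x j) \<le> exp (- lam * \<sigma> * ?\<tau> j) * ?A" for j
    using sw_pt_bound[OF \<phi>_pos x_stab[THEN spec, THEN spec, THEN mp, OF u_lb]] .
  have bounded: "norm (z (?\<tau> j) x0) \<le> ?A" "norm (?x j) \<le> ?A" for j
    using order_trans[OF z_decay shrink] order_trans[OF x_decay shrink] \<sigma>_pos lam_range \<tau>_nonneg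
    by simp_all
  have dt_eq: "(\<lambda>hh x. (1 / hh) *\<^sub>R (z hh x - x) - F hh x) = trunc_err z F"
    by (simp add: fun_eq_iff trunc_err_def)
  show ?thesis unfolding dt_eq Let_def hyb_traj_switch_points(2)
  proof (intro allI conjI)
    fix i
    let ?e = "norm (z (?\<tau> (Suc i)) x0 - ?x (Suc i))"
      and ?D = "Max ((\<lambda>j. norm (trunc_err z F (step_size \<phi> F u x0 j) (z (?\<tau> j) x0))) ` {0..i})"
    show growth: "?e \<le> ?D / L x0 * (exp (L x0 * ?\<tau> (Suc i)) - 1)"
      using F_lip[rule_format, OF bounded(2) bounded(1)]
      by (intro hybrid_error_growth[OF f_lip z_init z_ode \<phi>_pos u_nonneg L_pos[rule_format]])
    have decay: "?e \<le> 2 * ?A * exp (- (lam * \<sigma>) * ?\<tau> (Suc i))"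
      using difference_decay[OF z_decay x_decay A] \<sigma>_pos lam_range \<tau>_nonneg by simp
    have "?D \<ge> 0" by (rule order_trans[OF norm_ge_zero Max_ge]) auto
    then show "?e \<le> (?D / L x0) powr (lam * \<sigma> / (lam * \<sigma> + L x0)) * (2 * ?A) powr (L x0 / (lam * \<sigma> + L x0))"
      using interpolate_bounds[OF _ _ _ _ _ growth decay] A \<sigma>_pos lam_range L_pos by simp
  qed
qed

end
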